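(* Let $p\geq 3$ and let $\Gamma$ be a $p$-hamiltonian graph in normalized form with vertices $v_1,\dots,v_\gamma$. (1) If $\Gamma'$ is a twist of $\Gamma$, then $\Gamma$ and $\Gamma'$ are linked. (2) Suppose $\Gamma$ is 3-edge-connected, fix a chord $d_{i,j}$ with $i<j$, and let $d_{j+1,*}$ be a chord with one endpoint $v_{j+1}$ and other endpoint $v_h$. Suppose that either (a) $j+1<h$, or (b) $i<h<j$ and there exists a third chord $d_{x,y}$ with $1\leq i<h<x<j<j+1<y$. Then the graph obtained from $\Gamma$ by twisting the pair $(d_{i,j},d_{j+1,*})$ into the pair $(d_{i,j+1},d_{j,*})$ (i.e. replacing the chord $v_iv_j$ by a chord $v_iv_{j+1}$ and the chord $v_{j+1}v_h$ by a chord $v_jv_h$) is 3-edge-connected and strongly linked to $\Gamma$.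
   Context: A $p$-hamiltonian graph is a finite connected loopless graph (multiple edges allowed), $p$-regular, with at least 2 vertices, containing a hamiltonian cycle $\Delta$. Normalized form: fix $\Delta$, $\gamma=|V(\Gamma)|$ and label vertices $v_1,\dots,v_\gamma$ so that $\Delta$ consists of edges $e_i$ joining $v_i,v_{i+1}$ (indices mod $\gamma$). Chords are edges not in $\Delta$; $d_{a,b}$ denotes a chord joining $v_a$ and $v_b$. Twist: given two chords $d_{i,j}$ and $d_{k,l}$ (no ordering assumed on indices here), the graph $\Gamma'$ obtained by replacing $d_{i,j}$ with a new chord $d_{i,k}$ joining $v_i,v_k$ and $d_{k,l}$ with a new chord $d_{j,l}$ joining $v_j,v_l$, all else unchanged, is called a twist of $\Gamma$. $\Gamma/e$ denotes contraction of edge $e$. Strongly linked: non-loop edges $e_i\in E(\Gamma_i)$ and an isomorphism $\Gamma_1/e_1\cong\Gamma_2/e_2$ carrying the image vertex of $e_1$ to that of $e_2$. Linked: joined by a finite chain of consecutively strongly linked graphs. 3-edge-connected: at least one vertex and connected after deleting any fewer than 3 edges. *)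

theory Defs
  imports Main
begin

text \<open>Finite multigraphs: vertices and edges are natural numbers; each edge has
  a set of one (loop) or two endpoints.\<close>

record mgraph =
  verts :: "nat set"
  edges :: "nat set"
  ends  :: "nat \<Rightarrow> nat set"

definition wf_mgraph :: "mgraph \<Rightarrow> bool" where
  "wf_mgraph G \<longleftrightarrow> finite (verts G) \<and> finite (edges G) \<and>
     (\<forall>e\<in>edges G. ends G e \<subseteq> verts G \<and> 1 \<le> card (ends G e) \<and> card (ends G e) \<le> 2)"

definition non_loop :: "mgraph \<Rightarrow> nat \<Rightarrow> bool" where
  "non_loop G e \<longleftrightarrow> card (ends G e) = 2"

definition loopless :: "mgraph \<Rightarrow> bool" where
  "loopless G \<longleftrightarrow> (\<forall>e\<in>edges G. non_loop G e)"

text \<open>Degree (for loopless graphs): number of incident edges.\<close>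
definition regular :: "nat \<Rightarrow> mgraph \<Rightarrow> bool" where
  "regular p G \<longleftrightarrow> (\<forall>v\<in>verts G. card {e\<in>edges G. v \<in> ends G e} = p)"

definition adj_via :: "mgraph \<Rightarrow> nat set \<Rightarrow> nat \<Rightarrow> nat \<Rightarrow> bool" where
  "adj_via G F u v \<longleftrightarrow> (\<exists>e\<in>F. u \<in> ends G e \<and> v \<in> ends G e)"

definition connected_via :: "mgraph \<Rightarrow> nat set \<Rightarrow> bool" where
  "connected_via G F \<longleftrightarrow> (\<forall>u\<in>verts G. \<forall>v\<in>verts G. (adj_via G F)\<^sup>*\<^sup>* u v)"

definition connected :: "mgraph \<Rightarrow> bool" where
  "connected G \<longleftrightarrow> connected_via G (edges G)"

definition three_edge_connected :: "mgraph \<Rightarrow> bool" where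
  "three_edge_connected G \<longleftrightarrow> verts G \<noteq> {} \<and>
     (\<forall>S. S \<subseteq> edges G \<longrightarrow> card S < 3 \<longrightarrow> connected_via G (edges G - S))"

definition contr_vertex :: "mgraph \<Rightarrow> nat \<Rightarrow> nat" where
  "contr_vertex G e = Min (ends G e)"

definition contract :: "mgraph \<Rightarrow> nat \<Rightarrow> mgraph" where
  "contract G e =
    (let a = Min (ends G e); b = Max (ends G e); f = (\<lambda>x. if x = b then a else x)
     in \<lparr> verts = verts G - {b}, edges = edges G - {e}, ends = (\<lambda>d. f ` ends G d) \<rparr>)"

definition iso_at :: "mgraph \<Rightarrow> mgraph \<Rightarrow> nat \<Rightarrow> nat \<Rightarrow> bool" where
  "iso_at G H x y \<longleftrightarrow> (\<exists>\<phi> \<psi>. bij_betw \<phi> (verts G) (verts H) \<and> bij_betw \<psi> (edges G) (edges H) \<and>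
      (\<forall>d\<in>edges G. ends H (\<psi> d) = \<phi> ` ends G d) \<and> \<phi> x = y)"

definition strongly_linked :: "mgraph \<Rightarrow> mgraph \<Rightarrow> bool" where
  "strongly_linked G1 G2 \<longleftrightarrow> (\<exists>e1\<in>edges G1. \<exists>e2\<in>edges G2. non_loop G1 e1 \<and> non_loop G2 e2 \<and>
      iso_at (contract G1 e1) (contract G2 e2) (contr_vertex G1 e1) (contr_vertex G2 e2))"

definition linked :: "mgraph \<Rightarrow> mgraph \<Rightarrow> bool" where
  "linked = (\<lambda>G H. wf_mgraph G \<and> wf_mgraph H \<and> strongly_linked G H)\<^sup>*\<^sup>*"

text \<open>p-hamiltonian graph in normalized form: vertices v_1..v_gamma are the
  numbers 1..gamma, and cyc i is the hamiltonian-cycle edge e_i joining v_i and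
  v_(i+1) (indices mod gamma).\<close>
definition nxt :: "nat \<Rightarrow> nat \<Rightarrow> nat" where
  "nxt \<gamma> i = i mod \<gamma> + 1"

definition p_ham_normal :: "nat \<Rightarrow> nat \<Rightarrow> mgraph \<Rightarrow> (nat \<Rightarrow> nat) \<Rightarrow> bool" where
  "p_ham_normal p \<gamma> G cyc \<longleftrightarrow> wf_mgraph G \<and> 2 \<le> \<gamma> \<and> verts G = {1..\<gamma>} \<and>
     loopless G \<and> connected G \<and> regular p G \<and>
     inj_on cyc {1..\<gamma>} \<and> cyc ` {1..\<gamma>} \<subseteq> edges G \<and>
     (\<forall>i\<in>{1..\<gamma>}. ends G (cyc i) = {i, nxt \<gamma> i})"

definition chords :: "nat \<Rightarrow> mgraph \<Rightarrow> (nat \<Rightarrow> nat) \<Rightarrow> nat set" where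
  "chords \<gamma> G cyc = edges G - cyc ` {1..\<gamma>}"

definition twist_graph :: "mgraph \<Rightarrow> nat \<Rightarrow> nat \<Rightarrow> nat \<Rightarrow> nat \<Rightarrow> nat \<Rightarrow> nat \<Rightarrow> mgraph" where
  "twist_graph G c1 c2 i j k l = G\<lparr> ends := (ends G)(c1 := {i, k}, c2 := {j, l}) \<rparr>"

definition is_twist :: "nat \<Rightarrow> mgraph \<Rightarrow> (nat \<Rightarrow> nat) \<Rightarrow> mgraph \<Rightarrow> bool" where
  "is_twist \<gamma> G cyc G' \<longleftrightarrow> (\<exists>c1 c2 i j k l.
      c1 \<in> chords \<gamma> G cyc \<and> c2 \<in> chords \<gamma> G cyc \<and> c1 \<noteq> c2 \<and>
      ends G c1 = {i, j} \<and> ends G c2 = {k, l} \<and> i \<noteq> k \<and> j \<noteq> l \<and>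
      G' = twist_graph G c1 c2 i j k l)"

end

theory Submission
  imports Defs
begin

(* Everything rests on one observation (strongly_linked_common_edge): if two
   graphs differ only in how some edges are attached, and the differences
   disappear once the two ends of a common edge e are identified, then
   contracting e yields the same graph, so the two graphs are strongly linked.

   Moving one
   end of a chord across a cycle edge is such a change, so sliding chord ends
   step by step along the hamiltonian path links G to its twist.

   Part (2): the twist exchanges v_j and v_(j+1) in two chords; contracting the
   cycle edge e_j between them gives strong linkage.  For 3-edge-connectivity,
   a cut of at most two edges avoiding e_j is repaired through e_j; a cut
   through e_j leaves at most two arcs of the hamiltonian cycle, and the
   order hypotheses guarantee a chord of the twisted graph crossing them. *)

definition contract_vmap :: "nat set \<Rightarrow> nat \<Rightarrow> nat" where
  "contract_vmap E x = (if x = Max E then Min E else x)"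

lemma contract_alt:
  "contract G e = \<lparr> verts = verts G - {Max (ends G e)}, edges = edges G - {e},
     ends = (\<lambda>d. contract_vmap (ends G e) ` ends G d) \<rparr>"
  unfolding contract_def contract_vmap_def Let_def ..

lemma contract_vmap_ends_eq: "contract_vmap {a, b} a = contract_vmap {a, b} b"
  unfolding contract_vmap_def by (cases "a \<le> b") (auto simp: max_def min_def)

lemma iso_at_refl: "iso_at X X x x"
  unfolding iso_at_def by (rule exI[of _ id], rule exI[of _ id]) auto

lemma strongly_linked_common_edge:
  assumes "verts H1 = verts H2" "edges H1 = edges H2" "e \<in> edges H1"
    and "ends H1 e = E" "ends H2 e = E" "card E = 2"
    and "\<And>d. contract_vmap E ` ends H1 d = contract_vmap E ` ends H2 d"
  shows "strongly_linked H1 H2"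
proof -
  have "contract H1 e = contract H2 e"
    unfolding contract_alt using assms by simp
  moreover have "contr_vertex H1 e = contr_vertex H2 e"
    unfolding contr_vertex_def using assms by simp
  ultimately show ?thesis
    unfolding strongly_linked_def non_loop_def using assms iso_at_refl by metis
qed

lemma rtranclp_chain:
  assumes step: "\<And>k. a \<le> k \<Longrightarrow> k < b \<Longrightarrow> r (f k) (f (Suc k)) \<and> r (f (Suc k)) (f k)"
    and "m \<in> {a..b}" "n \<in> {a..b}"
  shows "r\<^sup>*\<^sup>* (f m) (f n)"
proof -
  have from_a: "r\<^sup>*\<^sup>* (f a) (f k) \<and> r\<^sup>*\<^sup>* (f k) (f a)" if "k \<in> {a..b}" for k
  proof -
    from that have "a \<le> k" by simp
    then have "k \<le> b \<longrightarrow> r\<^sup>*\<^sup>* (f a) (f k) \<and> r\<^sup>*\<^sup>* (f k) (f a)"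
    proof (induction k rule: dec_induct)
      case base
      then show ?case by simp
    next
      case (step k)
      show ?case
      proof
        assume "Suc k \<le> b"
        with step have "r\<^sup>*\<^sup>* (f a) (f k)" "r\<^sup>*\<^sup>* (f k) (f a)"
          and "r (f k) (f (Suc k))" "r (f (Suc k)) (f k)" using assms(1)[of k] by auto
        then show "r\<^sup>*\<^sup>* (f a) (f (Suc k)) \<and> r\<^sup>*\<^sup>* (f (Suc k)) (f a)"
          by (meson rtranclp.rtrancl_into_rtrancl converse_rtranclp_into_rtranclp)
      qed
    qed
    with that show ?thesis by simp
  qed
  show ?thesis using from_a[OF assms(2)] from_a[OF assms(3)] by (meson rtranclp_trans)
qed

lemma ham_path:
  assumes "p_ham_normal p \<gamma> G cyc" "1 \<le> k" "k < \<gamma>"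
  shows "cyc k \<in> edges G \<and> ends G (cyc k) = {k, Suc k}"
  using assms unfolding p_ham_normal_def nxt_def by auto

lemma ham_chord:
  assumes "p_ham_normal p \<gamma> G cyc" "d \<in> chords \<gamma> G cyc"
  shows "d \<in> edges G" "d \<notin> cyc ` {1..\<gamma>}" "ends G d \<subseteq> {1..\<gamma>}"
  using assms unfolding p_ham_normal_def chords_def wf_mgraph_def by auto

lemma twist_keeps_cycle:
  assumes P: "p_ham_normal p \<gamma> G cyc" and "c1 \<in> chords \<gamma> G cyc" "c2 \<in> chords \<gamma> G cyc"
  shows "verts (twist_graph G c1 c2 a b c d) = {1..\<gamma>}" "edges (twist_graph G c1 c2 a b c d) = edges G"
    "\<forall>k\<in>{1..\<gamma>}. ends (twist_graph G c1 c2 a b c d) (cyc k) = {k, nxt \<gamma> k}"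
  using P ham_chord(2)[OF P assms(2)] ham_chord(2)[OF P assms(3)]
  unfolding twist_graph_def p_ham_normal_def by auto

definition reattach :: "mgraph \<Rightarrow> nat \<Rightarrow> nat \<Rightarrow> nat \<Rightarrow> mgraph" where
  "reattach H c a v = H\<lparr>ends := (ends H)(c := {a, v})\<rparr>"

lemma wf_reattach:
  assumes "wf_mgraph H" "a \<in> verts H" "v \<in> verts H"
  shows "wf_mgraph (reattach H c a v)"
  using assms unfolding wf_mgraph_def reattach_def by (auto simp: card_insert_if)

(* Sliding one end of c across an edge e (from v to w) gives a strongly linked
   graph: both graphs contract along e to the same graph. *)
lemma strongly_linked_slide:
  assumes "e \<in> edges H" "e \<noteq> c" "ends H e = {v, w}" "v \<noteq> w"
  shows "strongly_linked (reattach H c a v) (reattach H c a w)"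
proof (rule strongly_linked_common_edge)
  show "ends (reattach H c a v) e = {v, w}" "ends (reattach H c a w) e = {v, w}"
    using assms by (simp_all add: reattach_def)
  show "contract_vmap {v, w} ` ends (reattach H c a v) d = contract_vmap {v, w} ` ends (reattach H c a w) d" for d
    using contract_vmap_ends_eq[of v w] by (simp add: reattach_def)
qed (use assms in \<open>simp_all add: reattach_def\<close>)

lemma linked_slide_along_path:
  assumes wf: "wf_mgraph H" and V: "verts H = {1..\<gamma>}"
    and path: "\<And>k. 1 \<le> k \<Longrightarrow> k < \<gamma> \<Longrightarrow> cyc k \<in> edges H \<and> cyc k \<noteq> c \<and> ends H (cyc k) = {k, Suc k}"
    and "a \<in> {1..\<gamma>}" "v \<in> {1..\<gamma>}" "w \<in> {1..\<gamma>}"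
  shows "linked (reattach H c a v) (reattach H c a w)"
  unfolding linked_def
proof (rule rtranclp_chain[where f = "reattach H c a"])
  fix k assume k: "1 \<le> k" "k < \<gamma>"
  have "wf_mgraph (reattach H c a k)" "wf_mgraph (reattach H c a (Suc k))"
    using wf_reattach[OF wf] assms(4) k V by auto
  moreover have "strongly_linked (reattach H c a k) (reattach H c a (Suc k))"
    "strongly_linked (reattach H c a (Suc k)) (reattach H c a k)"
    using strongly_linked_slide[of "cyc k" H c k "Suc k" a] strongly_linked_slide[of "cyc k" H c "Suc k" k a]
      path[OF k] by (auto simp: insert_commute)
  ultimately show "(\<lambda>G H. wf_mgraph G \<and> wf_mgraph H \<and> strongly_linked G H) (reattach H c a k) (reattach H c a (Suc k)) \<and>
    (\<lambda>G H. wf_mgraph G \<and> wf_mgraph H \<and> strongly_linked G H) (reattach H c a (Suc k)) (reattach H c a k)"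
    by simp
qed (use assms in auto)

(* Part (1): a twist is obtained by two sequences of slides, moving first one
   end of d_(i,j) from v_j to v_k and then one end of d_(k,l) from v_k to v_j. *)
lemma twist_linked:
  assumes P: "p_ham_normal p \<gamma> G cyc" and T: "is_twist \<gamma> G cyc G'"
  shows "linked G G'"
proof -
  from T obtain c1 c2 i j k l where
    c: "c1 \<in> chords \<gamma> G cyc" "c2 \<in> chords \<gamma> G cyc" "c1 \<noteq> c2"
    and e: "ends G c1 = {i, j}" "ends G c2 = {k, l}" and G': "G' = twist_graph G c1 c2 i j k l"
    unfolding is_twist_def by blast
  have wf: "wf_mgraph G" and V: "verts G = {1..\<gamma>}"
    using P unfolding p_ham_normal_def by auto
  have chord_not_cyc: "cyc k \<noteq> d" if "d \<in> chords \<gamma> G cyc" "1 \<le> k" "k < \<gamma>" for d k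
    using ham_chord(2)[OF P that(1)] that by auto
  have ijkl: "i \<in> {1..\<gamma>}" "j \<in> {1..\<gamma>}" "k \<in> {1..\<gamma>}" "l \<in> {1..\<gamma>}"
    using ham_chord(3)[OF P c(1)] ham_chord(3)[OF P c(2)] e by auto
  define H where "H = reattach G c1 i k"
  have "G = reattach G c1 i j" using e by (simp add: reattach_def fun_upd_idem)
  then have L1: "linked G H" unfolding H_def
    using linked_slide_along_path[OF wf V _ ijkl(1,2,3), of cyc] ham_path[OF P] chord_not_cyc[OF c(1)] by metis
  have H: "wf_mgraph H" "verts H = {1..\<gamma>}" "edges H = edges G" "ends H c2 = {l, k}"
    "\<And>d. d \<noteq> c1 \<Longrightarrow> ends H d = ends G d"
    using wf_reattach[OF wf] ijkl V e c(3) by (auto simp: H_def reattach_def)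
  have "H = reattach H c2 l k" using H(4) by (simp add: reattach_def fun_upd_idem)
  moreover have "G' = reattach H c2 l j"
    unfolding G' twist_graph_def H_def reattach_def by (simp add: insert_commute)
  moreover have "linked (reattach H c2 l k) (reattach H c2 l j)"
  proof (rule linked_slide_along_path[OF H(1,2) _ ijkl(4,3,2)])
    fix m assume "1 \<le> m" "m < \<gamma>"
    then show "cyc m \<in> edges H \<and> cyc m \<noteq> c2 \<and> ends H (cyc m) = {m, Suc m}"
      using ham_path[OF P] chord_not_cyc[OF c(1)] chord_not_cyc[OF c(2)] H(3,5) by metis
  qed
  ultimately have L2: "linked H G'" by simp
  show ?thesis using L1 L2 unfolding linked_def by (rule rtranclp_trans)
qed

lemma reach_sym: "(adj_via H F)\<^sup>*\<^sup>* u v \<Longrightarrow> (adj_via H F)\<^sup>*\<^sup>* v u"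
proof (rule sympD[OF symp_rtranclp])
  show "symp (adj_via H F)" unfolding symp_def adj_via_def by blast
qed

lemma reach_edge: "d \<in> F \<Longrightarrow> u \<in> ends H d \<Longrightarrow> v \<in> ends H d \<Longrightarrow> (adj_via H F)\<^sup>*\<^sup>* u v"
  unfolding adj_via_def by (rule r_into_rtranclp) blast

lemma connected_via_hub:
  assumes "\<And>v. v \<in> verts H \<Longrightarrow> (adj_via H F)\<^sup>*\<^sup>* v z"
  shows "connected_via H F"
  unfolding connected_via_def
proof (intro ballI)
  fix u v assume "u \<in> verts H" "v \<in> verts H"
  then show "(adj_via H F)\<^sup>*\<^sup>* u v"
    using assms[of u] reach_sym[OF assms[of v]] rtranclp_trans by metis
qed

lemma cycle_arc:
  assumes CE: "\<forall>k\<in>{1..\<gamma>}. ends H (cyc k) = {k, nxt \<gamma> k}"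
    and "1 \<le> a" "b \<le> \<gamma>" "\<forall>k\<in>{a..<b}. cyc k \<in> F" "u \<in> {a..b}" "v \<in> {a..b}"
  shows "(adj_via H F)\<^sup>*\<^sup>* u v"
proof -
  have "(adj_via H F)\<^sup>*\<^sup>* (id u) (id v)"
  proof (rule rtranclp_chain[OF _ assms(5,6)])
    fix k assume "a \<le> k" "k < b"
    then have "cyc k \<in> F" "ends H (cyc k) = {k, Suc k}" using assms by (auto simp: nxt_def)
    then show "adj_via H F (id k) (id (Suc k)) \<and> adj_via H F (id (Suc k)) (id k)"
      unfolding adj_via_def by auto
  qed
  then show ?thesis by simp
qed

lemma cycle_wrap:
  assumes "\<forall>k\<in>{1..\<gamma>}. ends H (cyc k) = {k, nxt \<gamma> k}" "cyc \<gamma> \<in> F" "1 \<le> \<gamma>"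
  shows "(adj_via H F)\<^sup>*\<^sup>* \<gamma> 1"
  using assms by (intro reach_edge[of "cyc \<gamma>"]) (auto simp: nxt_def)

lemma cycle_minus_edge_connected:
  assumes V: "verts H = {1..\<gamma>}" and CE: "\<forall>k\<in>{1..\<gamma>}. ends H (cyc k) = {k, nxt \<gamma> k}"
    and F: "\<forall>k\<in>{1..\<gamma>}. k \<noteq> j \<longrightarrow> cyc k \<in> F"
  shows "connected_via H F"
proof (rule connected_via_hub)
  fix v assume "v \<in> verts H"
  then have v: "v \<in> {1..\<gamma>}" using V by simp
  show "(adj_via H F)\<^sup>*\<^sup>* v 1"
  proof (cases "v \<le> j")
    case True
    then show ?thesis using v F by (intro cycle_arc[OF CE, of 1 v]) auto
  next
    case False
    then have "(adj_via H F)\<^sup>*\<^sup>* v \<gamma>" using v F by (intro cycle_arc[OF CE, of v \<gamma>]) auto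
    moreover have "(adj_via H F)\<^sup>*\<^sup>* \<gamma> 1" using False v F by (intro cycle_wrap[OF CE]) auto
    ultimately show ?thesis by (rule rtranclp_trans)
  qed
qed

definition joins :: "mgraph \<Rightarrow> nat set \<Rightarrow> nat set \<Rightarrow> nat set \<Rightarrow> bool" where
  "joins H F A B \<longleftrightarrow> (\<exists>d\<in>F. \<exists>u\<in>A. \<exists>w\<in>B. u \<in> ends H d \<and> w \<in> ends H d)"

lemma joinsI: "d \<in> F \<Longrightarrow> u \<in> ends H d \<Longrightarrow> w \<in> ends H d \<Longrightarrow> u \<in> A \<Longrightarrow> w \<in> B \<Longrightarrow> joins H F A B"
  unfolding joins_def by blast

(* Deleting the cycle edges e_lo and e_hi cuts the cycle into the arc
   {lo+1..hi} and its complement; an edge of F crossing between the two arcs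
   reconnects the graph. *)
lemma cycle_minus_two_edges_connected:
  assumes V: "verts H = {1..\<gamma>}" and CE: "\<forall>k\<in>{1..\<gamma>}. ends H (cyc k) = {k, nxt \<gamma> k}"
    and lh: "lo < hi" "hi \<le> \<gamma>"
    and F: "\<forall>k\<in>{1..\<gamma>}. k \<noteq> lo \<longrightarrow> k \<noteq> hi \<longrightarrow> cyc k \<in> F"
    and cross: "joins H F {Suc lo..hi} ({1..\<gamma>} - {Suc lo..hi})"
  shows "connected_via H F"
proof -
  have outer: "(adj_via H F)\<^sup>*\<^sup>* v 1" if "v \<in> {1..\<gamma>} - {Suc lo..hi}" for v
  proof (cases "v \<le> lo")
    case True
    then show ?thesis using that lh F by (intro cycle_arc[OF CE, of 1 v]) auto
  next
    case False
    then have "hi < v" using that by auto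
    then have "(adj_via H F)\<^sup>*\<^sup>* v \<gamma>" using that lh F by (intro cycle_arc[OF CE, of v \<gamma>]) auto
    moreover have "(adj_via H F)\<^sup>*\<^sup>* \<gamma> 1" using \<open>hi < v\<close> that lh F by (intro cycle_wrap[OF CE]) auto
    ultimately show ?thesis by (rule rtranclp_trans)
  qed
  have inner: "(adj_via H F)\<^sup>*\<^sup>* v (Suc lo)" if "v \<in> {Suc lo..hi}" for v
    using that lh F by (intro cycle_arc[OF CE, of "Suc lo" hi]) auto
  from cross obtain d u w where "d \<in> F" "u \<in> {Suc lo..hi}" "w \<in> {1..\<gamma>} - {Suc lo..hi}"
    "u \<in> ends H d" "w \<in> ends H d" unfolding joins_def by blast
  then have "(adj_via H F)\<^sup>*\<^sup>* (Suc lo) u" "(adj_via H F)\<^sup>*\<^sup>* u w" "(adj_via H F)\<^sup>*\<^sup>* w 1"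
    using reach_edge inner reach_sym outer by blast+
  then have bridge: "(adj_via H F)\<^sup>*\<^sup>* (Suc lo) 1" by (meson rtranclp_trans)
  show ?thesis
  proof (rule connected_via_hub)
    fix v assume "v \<in> verts H"
    then show "(adj_via H F)\<^sup>*\<^sup>* v 1"
    proof (cases "v \<in> {Suc lo..hi}")
      case True
      then show ?thesis using inner bridge by (meson rtranclp_trans)
    qed (use V outer in auto)
  qed
qed

lemma connected_via_transfer:
  assumes "verts H' = verts H" "connected_via H F"
    and "\<And>d u v. d \<in> F \<Longrightarrow> u \<in> ends H d \<Longrightarrow> v \<in> ends H d \<Longrightarrow> (adj_via H' F)\<^sup>*\<^sup>* u v"
  shows "connected_via H' F"
proof -
  have "adj_via H F \<le> (adj_via H' F)\<^sup>*\<^sup>*" using assms(3) unfolding adj_via_def by blast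
  then have "(adj_via H F)\<^sup>*\<^sup>* \<le> (adj_via H' F)\<^sup>*\<^sup>*" using rtranclp_mono by force
  then show ?thesis using assms(1,2) unfolding connected_via_def by blast
qed

(* Twisting across an edge e joining v_a and v_b (replacing d_(i,a), d_(b,h) by
   d_(i,b), d_(a,h)) gives a strongly linked graph: contract e in both. *)
lemma twist_strongly_linked:
  assumes "e \<in> edges G" "e \<noteq> c1" "e \<noteq> c2" "ends G e = {a, b}" "a \<noteq> b"
    and "ends G c1 = {i, a}" "ends G c2 = {b, h}"
  shows "strongly_linked G (twist_graph G c1 c2 i a b h)"
proof (rule strongly_linked_common_edge)
  show "ends (twist_graph G c1 c2 i a b h) e = {a, b}"
    using assms by (simp add: twist_graph_def)
  show "contract_vmap {a, b} ` ends G d = contract_vmap {a, b} ` ends (twist_graph G c1 c2 i a b h) d" for d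
    using assms(6,7) contract_vmap_ends_eq[of a b] by (auto simp: twist_graph_def)
qed (use assms in \<open>simp_all add: twist_graph_def\<close>)

(* Part (2), strong linkage: the twist exchanges v_j and v_(j+1), which are
   joined by the cycle edge e_j. *)
lemma twist_across_cycle_edge_strongly_linked:
  assumes P: "p_ham_normal p \<gamma> G cyc"
    and c1: "c1 \<in> chords \<gamma> G cyc" "ends G c1 = {i, j}" "i < j"
    and c2: "c2 \<in> chords \<gamma> G cyc" "ends G c2 = {Suc j, h}"
  shows "strongly_linked G (twist_graph G c1 c2 i j (Suc j) h)"
proof (rule twist_strongly_linked)
  have j: "1 \<le> j" "j < \<gamma>" using ham_chord(3)[OF P c1(1)] ham_chord(3)[OF P c2(1)] c1 c2 by auto
  show "cyc j \<in> edges G" "ends G (cyc j) = {j, Suc j}" using ham_path[OF P j] by auto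
  show "cyc j \<noteq> c1" "cyc j \<noteq> c2" using ham_chord(2)[OF P c1(1)] ham_chord(2)[OF P c2(1)] j by auto
qed (use c1 c2 in auto)

(* Such a twist preserves connectivity via any edge set F containing e: the
   old ends of the twisted chords are reconnected through e. *)
lemma twist_connected_via:
  assumes "e \<in> F" "e \<noteq> c1" "e \<noteq> c2" "ends G e = {a, b}"
    and "ends G c1 = {i, a}" "ends G c2 = {b, h}" and "connected_via G F"
  shows "connected_via (twist_graph G c1 c2 i a b h) F"
proof (rule connected_via_transfer)
  define G' where "G' = twist_graph G c1 c2 i a b h"
  have e: "(adj_via G' F)\<^sup>*\<^sup>* b a"
    using assms by (intro reach_edge[of e]) (auto simp: G'_def twist_graph_def)
  fix d u v assume d: "d \<in> F" "u \<in> ends G d" "v \<in> ends G d"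
  consider "d = c2" | "d = c1" "d \<noteq> c2" | "d \<noteq> c1" "d \<noteq> c2" by blast
  then show "(adj_via G' F)\<^sup>*\<^sup>* u v"
  proof cases
    case 1
    have "(adj_via G' F)\<^sup>*\<^sup>* h a" using d 1 by (intro reach_edge[of c2]) (auto simp: G'_def twist_graph_def)
    then have "(adj_via G' F)\<^sup>*\<^sup>* x a" if "x \<in> {b, h}" for x using that e by auto
    then show ?thesis using d 1 assms(6) reach_sym rtranclp_trans by (metis insertI1 insert_commute)
  next
    case 2
    have "(adj_via G' F)\<^sup>*\<^sup>* i b" using d 2 by (intro reach_edge[of c1]) (auto simp: G'_def twist_graph_def)
    then have "(adj_via G' F)\<^sup>*\<^sup>* x b" if "x \<in> {i, a}" for x using that e reach_sym by auto
    then show ?thesis using d 2 assms(5) reach_sym rtranclp_trans by metis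
  next
    case 3
    then show ?thesis using d by (intro reach_edge[of d]) (auto simp: G'_def twist_graph_def)
  qed
qed (simp add: twist_graph_def, fact)

lemma small_cut_through_cycle_edge:
  assumes "finite S" "card S < 3" "cyc j \<in> S" "inj_on cyc {1..\<gamma>}" "j \<in> {1..\<gamma>}"
  obtains "\<forall>k\<in>{1..\<gamma>}. k \<noteq> j \<longrightarrow> cyc k \<notin> S"
    | m where "m \<in> {1..\<gamma>}" "m \<noteq> j" "S = {cyc j, cyc m}"
proof (cases "\<exists>m\<in>{1..\<gamma>}. m \<noteq> j \<and> cyc m \<in> S")
  case True
  then obtain m where m: "m \<in> {1..\<gamma>}" "m \<noteq> j" "cyc m \<in> S" by blast
  then have "cyc m \<noteq> cyc j" using assms(4,5) by (auto dest: inj_onD)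
  then have "{cyc j, cyc m} \<subseteq> S" "card {cyc j, cyc m} = 2" using m assms(3) by auto
  moreover have "card S \<le> card {cyc j, cyc m}" using \<open>card {cyc j, cyc m} = 2\<close> assms(2) by simp
  ultimately have "S = {cyc j, cyc m}" using card_seteq[OF assms(1)] by blast
  then show ?thesis using m that(2) by blast
qed (use that(1) in blast)

(* The combinatorial heart of part (2): after the twist, for every m <> j one
   of the chords d_(i,j+1), d_(j,h) or d_(x,y) crosses between the two arcs
   into which deleting e_j and e_m cuts the cycle. *)
lemma twisted_chords_cross:
  assumes c: "c1 \<in> F" "c2 \<in> F" "ends H c1 = {i, Suc j}" "ends H c2 = {j, h}"
    and rng: "1 \<le> i" "i < j" "Suc j \<le> \<gamma>" "h \<in> {1..\<gamma>}" "m \<in> {1..\<gamma>}" "m \<noteq> j"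
    and cond: "Suc j < h \<or> (i < h \<and> h < j \<and>
      (\<exists>c3\<in>F. \<exists>x y. ends H c3 = {x, y} \<and> h < x \<and> x < j \<and> Suc j < y \<and> y \<le> \<gamma>))"
  defines "A \<equiv> {Suc (min j m)..max j m}"
  shows "joins H F A ({1..\<gamma>} - A)"
proof (cases "j < m")
  case jm: True
  then have A: "A = {Suc j..m}" by (simp add: A_def)
  show ?thesis
  proof (cases "h \<in> A")
    case True
    show ?thesis by (rule joinsI[OF c(2), where u = h and w = j]) (use c rng A True in auto)
  next
    case False
    show ?thesis by (rule joinsI[OF c(1), where u = "Suc j" and w = i]) (use c rng A False jm in auto)
  qed
next
  case mj: False
  then have A: "A = {Suc m..j}" using rng by (simp add: A_def)
  show ?thesis
  proof (cases "h \<in> A")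
    case False
    show ?thesis by (rule joinsI[OF c(2), where u = j and w = h]) (use c rng A False mj in auto)
  next
    case hA: True
    then have "h \<le> j" by (simp add: A)
    then obtain c3 x y where "c3 \<in> F" "ends H c3 = {x, y}" "h < x" "x < j" "Suc j < y" "y \<le> \<gamma>"
      using cond by auto
    then show ?thesis by (intro joinsI[where d = c3 and u = x and w = y]) (use A hA in auto)
  qed
qed

lemma twist_fixes_third_chord:
  assumes "ends G c1 = {i, j}" "ends G c2 = {Suc j, h}" "ends G c3 = {x, y}"
    and "h < x" "x < j" "Suc j < y"
  shows "ends (twist_graph G c1 c2 i j (Suc j) h) c3 = {x, y}"
proof -
  have "c3 \<noteq> c1" "c3 \<noteq> c2" using assms by (auto simp: doubleton_eq_iff)
  then show ?thesis using assms(3) by (simp add: twist_graph_def)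
qed

lemma twist_cut_through_cycle_edge:
  assumes P: "p_ham_normal p \<gamma> G cyc"
    and c1: "c1 \<in> chords \<gamma> G cyc" "ends G c1 = {i, j}" "i < j"
    and c2: "c2 \<in> chords \<gamma> G cyc" "ends G c2 = {Suc j, h}"
    and cond: "Suc j < h \<or> (i < h \<and> h < j \<and> (\<exists>c3 x y. c3 \<in> chords \<gamma> G cyc \<and>
      ends G c3 = {x, y} \<and> h < x \<and> x < j \<and> Suc j < y))"
    and S: "S \<subseteq> edges G" "card S < 3" "cyc j \<in> S"
  shows "connected_via (twist_graph G c1 c2 i j (Suc j) h) (edges G - S)"
proof -
  define G' where "G' = twist_graph G c1 c2 i j (Suc j) h"
  note G'_cyc = twist_keeps_cycle[OF P c1(1) c2(1), of i j "Suc j" h, folded G'_def]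
  have wf: "wf_mgraph G" and cyc: "cyc ` {1..\<gamma>} \<subseteq> edges G" "inj_on cyc {1..\<gamma>}"
    using P unfolding p_ham_normal_def by auto
  have rng: "1 \<le> i" "Suc j \<le> \<gamma>" "h \<in> {1..\<gamma>}" "j \<in> {1..\<gamma>}"
    using ham_chord(3)[OF P c1(1)] ham_chord(3)[OF P c2(1)] c1 c2 by auto
  have "c1 \<noteq> c2" using c1(2,3) c2(2) by (auto simp: doubleton_eq_iff)
  then have G': "ends G' c1 = {i, Suc j}" "ends G' c2 = {j, h}"
    by (simp_all add: G'_def twist_graph_def)
  have "finite S" using S wf unfolding wf_mgraph_def by (auto intro: finite_subset)
  from small_cut_through_cycle_edge[OF this S(2,3) cyc(2) rng(4)] show ?thesis
  proof cases
    case 1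
    then show ?thesis unfolding G'_def[symmetric] using cyc(1)
      by (intro cycle_minus_edge_connected[OF G'_cyc(1,3), of j]) auto
  next
    case (2 m)
    have F: "d \<in> edges G - S" if "d \<in> chords \<gamma> G cyc" for d
      using ham_chord(1,2)[OF P that] 2 rng(4) by auto
    have "Suc j < h \<or> (i < h \<and> h < j \<and> (\<exists>c3\<in>edges G - S. \<exists>x y. ends G' c3 = {x, y} \<and>
      h < x \<and> x < j \<and> Suc j < y \<and> y \<le> \<gamma>))"
    proof (cases "Suc j < h")
      case False
      then obtain c3 x y where c3: "c3 \<in> chords \<gamma> G cyc" "ends G c3 = {x, y}"
        and ord: "i < h" "h < j" "h < x" "x < j" "Suc j < y" using cond by blast
      have "ends G' c3 = {x, y}"
        unfolding G'_def using twist_fixes_third_chord[OF c1(2) c2(2) c3(2) ord(3-5)] .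
      moreover have "y \<le> \<gamma>" using ham_chord(3)[OF P c3(1)] c3(2) by auto
      ultimately show ?thesis using F[OF c3(1)] ord by blast
    qed simp
    then have "joins G' (edges G - S) {Suc (min j m)..max j m} ({1..\<gamma>} - {Suc (min j m)..max j m})"
      by (rule twisted_chords_cross[OF F[OF c1(1)] F[OF c2(1)] G'(1,2) rng(1) c1(3) rng(2,3) 2(1,2)])
    moreover have "\<forall>k\<in>{1..\<gamma>}. k \<noteq> min j m \<longrightarrow> k \<noteq> max j m \<longrightarrow> cyc k \<in> edges G - S"
      using 2 rng(4) cyc by (auto dest: inj_onD)
    ultimately show ?thesis unfolding G'_def[symmetric] using 2 rng
      by (intro cycle_minus_two_edges_connected[OF G'_cyc(1,3)]) auto
  qed
qed

lemma twist_three_edge_connected: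
  assumes P: "p_ham_normal p \<gamma> G cyc" and T3: "three_edge_connected G"
    and c1: "c1 \<in> chords \<gamma> G cyc" "ends G c1 = {i, j}" "i < j"
    and c2: "c2 \<in> chords \<gamma> G cyc" "ends G c2 = {Suc j, h}"
    and cond: "Suc j < h \<or> (i < h \<and> h < j \<and> (\<exists>c3 x y. c3 \<in> chords \<gamma> G cyc \<and>
      ends G c3 = {x, y} \<and> h < x \<and> x < j \<and> Suc j < y))"
  shows "three_edge_connected (twist_graph G c1 c2 i j (Suc j) h)"
  unfolding three_edge_connected_def
proof (intro conjI allI impI)
  note G'_cyc = twist_keeps_cycle[OF P c1(1) c2(1), of i j "Suc j" h]
  have j: "1 \<le> j" "j < \<gamma>" using ham_chord(3)[OF P c1(1)] ham_chord(3)[OF P c2(1)] c1 c2 by auto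
  then show "verts (twist_graph G c1 c2 i j (Suc j) h) \<noteq> {}" using G'_cyc(1) by auto
  have e: "cyc j \<in> edges G" "cyc j \<noteq> c1" "cyc j \<noteq> c2" "ends G (cyc j) = {j, Suc j}"
    using ham_path[OF P j] ham_chord(2)[OF P c1(1)] ham_chord(2)[OF P c2(1)] j by auto
  fix S assume S: "S \<subseteq> edges (twist_graph G c1 c2 i j (Suc j) h)" "card S < 3"
  show "connected_via (twist_graph G c1 c2 i j (Suc j) h) (edges (twist_graph G c1 c2 i j (Suc j) h) - S)"
  proof (cases "cyc j \<in> S")
    case False
    have "connected_via G (edges G - S)" using T3 S G'_cyc(2) unfolding three_edge_connected_def by auto
    then show ?thesis using twist_connected_via[of "cyc j" "edges G - S"] e False c1(2) c2(2) G'_cyc(2)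
      by (simp add: insert_commute)
  next
    case True
    then show ?thesis using twist_cut_through_cycle_edge[OF P c1 c2 cond] S G'_cyc(2) by simp
  qed
qed

(* Part (1) is twist_linked; in part (2) the stated hypotheses imply those of
   the lemmas above, where the distinctness of the third chord is automatic. *)
theorem mainTheorem8:
  fixes p \<gamma> :: nat and G :: mgraph and cyc :: "nat \<Rightarrow> nat"
  assumes "3 \<le> p" and "p_ham_normal p \<gamma> G cyc"
  shows "(\<forall>G'. is_twist \<gamma> G cyc G' \<longrightarrow> linked G G') \<and>
    (\<forall>c1 c2 i j h.
       three_edge_connected G \<longrightarrow>
       c1 \<in> chords \<gamma> G cyc \<longrightarrow> ends G c1 = {i, j} \<longrightarrow> i < j \<longrightarrow>
       c2 \<in> chords \<gamma> G cyc \<longrightarrow> ends G c2 = {j + 1, h} \<longrightarrow>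
       (j + 1 < h \<or>
        (i < h \<and> h < j \<and> (\<exists>c3 x y. c3 \<in> chords \<gamma> G cyc \<and> c3 \<noteq> c1 \<and> c3 \<noteq> c2 \<and>
            ends G c3 = {x, y} \<and> 1 \<le> i \<and> i < h \<and> h < x \<and> x < j \<and> j < j + 1 \<and> j + 1 < y))) \<longrightarrow>
       three_edge_connected (twist_graph G c1 c2 i j (j + 1) h) \<and>
       strongly_linked G (twist_graph G c1 c2 i j (j + 1) h))"
proof (intro conjI allI impI)
  fix G' assume "is_twist \<gamma> G cyc G'"
  then show "linked G G'" by (rule twist_linked[OF assms(2)])
next
  fix c1 c2 i j h
  assume T3: "three_edge_connected G" and c1: "c1 \<in> chords \<gamma> G cyc" "ends G c1 = {i, j}" "i < j"
    and c2: "c2 \<in> chords \<gamma> G cyc" "ends G c2 = {j + 1, h}"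
    and cond: "j + 1 < h \<or> (i < h \<and> h < j \<and> (\<exists>c3 x y. c3 \<in> chords \<gamma> G cyc \<and> c3 \<noteq> c1 \<and> c3 \<noteq> c2 \<and>
            ends G c3 = {x, y} \<and> 1 \<le> i \<and> i < h \<and> h < x \<and> x < j \<and> j < j + 1 \<and> j + 1 < y))"
  have c2': "ends G c2 = {Suc j, h}" using c2(2) by simp
  have cond': "Suc j < h \<or> (i < h \<and> h < j \<and> (\<exists>c3 x y. c3 \<in> chords \<gamma> G cyc \<and>
      ends G c3 = {x, y} \<and> h < x \<and> x < j \<and> Suc j < y))"
    using cond by auto
  show "three_edge_connected (twist_graph G c1 c2 i j (j + 1) h)"
    using twist_three_edge_connected[OF assms(2) T3 c1 c2(1) c2' cond'] by simp
  show "strongly_linked G (twist_graph G c1 c2 i j (j + 1) h)"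
    using twist_across_cycle_edge_strongly_linked[OF assms(2) c1 c2(1) c2'] by simp
qed

end
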